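(* Let \(S\) be an inverse semigroup with zero and unit, let \(E=E(S)\), and let \(\hat{E}\) carry the canonical action of \(S\) by the partial homeomorphisms \(c_g\colon U_{g^*g}\to U_{gg^*}\), \(c_g(\varphi)(e)=\varphi(g^*eg)\). Then this action is a terminal object in the category of actions of \(S\) on topological spaces: for every topological space \(X\) with an action of \(S\), there is a unique \(S\)-equivariant continuous map \(X\to\hat{E}\).
   Context: Inverse semigroups are assumed to have a zero \(0\) and a unit \(1\); homomorphisms preserve zero and unit. \(E=E(S)\) is the semilattice of idempotents of \(S\), ordered by \(e\le f\iff ef=e\). A character on \(E\) is a map \(\varphi\colon E\to\{0,1\}\) with \(\varphi(0)=0\), \(\varphi(1)=1\) and \(\varphi(ef)=\varphi(e)\varphi(f)\). \(\hat{E}\) is the set of characters. For \(e\in E\), \(U_e=\{\varphi\in\hat E:\varphi(e)=1\}\), and \(\hat{E}\) carries the topology generated by the sets \(U_e\). A partial homeomorphism of a space \(X\) is a homeomorphism between open subsets of \(X\). These form an inverse semigroup under composition of partial maps, with unit \(\mathrm{id}_X\) and zero the empty map. An action of \(S\) on a topological space \(X\) is a unit- and zero-preserving homomorphism from \(S\) to this inverse semigroup; write \(s\cdot x\) when defined. A map \(f\colon X\to Y\) between spaces with \(S\)-actions is \(S\)-equivariant if for all \(s\in S\), \(x\in X\): \(s\cdot x\) is defined iff \(s\cdot f(x)\) is defined, and then \(f(s\cdot x)=s\cdot f(x)\). *)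

theory Defs
  imports "HOL-Analysis.Analysis"
begin

text \<open>The inverse semigroup S is the whole type 's, with multiplication, unit 1 and zero 0
  from the type classes monoid_mult and mult_zero.  The inverse semigroup axiom
  (every element has a unique generalized inverse) is an explicit hypothesis.\<close>

definition inverse_semigroup_ax :: "'s::{monoid_mult,mult_zero} itself \<Rightarrow> bool" where
  "inverse_semigroup_ax _ \<longleftrightarrow> (\<forall>s::'s. \<exists>!t. s * t * s = s \<and> t * s * t = t)"

definition star :: "'s::monoid_mult \<Rightarrow> 's" where
  "star s = (THE t. s * t * s = s \<and> t * s * t = t)"

definition idems :: "'s::monoid_mult set" where
  "idems = {e. e * e = e}"

text \<open>Characters on E, represented as predicates on 's that vanish outside E.\<close>
definition characters :: "('s::{monoid_mult,mult_zero} \<Rightarrow> bool) set" where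
  "characters = {\<phi>. (\<forall>s. s \<notin> idems \<longrightarrow> \<not> \<phi> s) \<and> \<not> \<phi> 0 \<and> \<phi> 1 \<and>
                     (\<forall>e\<in>idems. \<forall>f\<in>idems. \<phi> (e * f) = (\<phi> e \<and> \<phi> f))}"

definition U_set :: "'s::{monoid_mult,mult_zero} \<Rightarrow> ('s \<Rightarrow> bool) set" where
  "U_set e = {\<phi> \<in> characters. \<phi> e}"

definition Ehat_top :: "('s::{monoid_mult,mult_zero} \<Rightarrow> bool) topology" where
  "Ehat_top = topology_generated_by {U_set e | e. e \<in> idems}"

text \<open>An action of S on X: partial maps (option-valued) that are homeomorphisms between
  open subsets of X; unit- and zero-preserving homomorphism to the inverse semigroup of
  partial homeomorphisms, product (s*t) acting as "first t, then s".\<close>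
definition is_action :: "'x topology \<Rightarrow> ('s::{monoid_mult,mult_zero} \<Rightarrow> 'x \<Rightarrow> 'x option) \<Rightarrow> bool" where
  "is_action X \<alpha> \<longleftrightarrow>
     (\<forall>s. dom (\<alpha> s) \<subseteq> topspace X \<and> openin X (dom (\<alpha> s)) \<and> openin X (ran (\<alpha> s)) \<and>
          homeomorphic_map (subtopology X (dom (\<alpha> s))) (subtopology X (ran (\<alpha> s)))
                           (\<lambda>x. the (\<alpha> s x))) \<and>
     (\<forall>x\<in>topspace X. \<alpha> 1 x = Some x) \<and>
     (\<forall>x. \<alpha> 0 x = None) \<and>
     (\<forall>s t x. \<alpha> (s * t) x = Option.bind (\<alpha> t x) (\<alpha> s))"

definition equivariant ::
  "'x topology \<Rightarrow> ('s \<Rightarrow> 'x \<Rightarrow> 'x option) \<Rightarrow> ('s \<Rightarrow> 'y \<Rightarrow> 'y option) \<Rightarrow> ('x \<Rightarrow> 'y) \<Rightarrow> bool" where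
  "equivariant X \<alpha> \<beta> f \<longleftrightarrow>
     (\<forall>s. \<forall>x\<in>topspace X. (\<alpha> s x \<noteq> None \<longleftrightarrow> \<beta> s (f x) \<noteq> None) \<and>
                        (\<alpha> s x \<noteq> None \<longrightarrow> \<beta> s (f x) = Some (f (the (\<alpha> s x)))))"

definition canon_action :: "'s::{monoid_mult,mult_zero} \<Rightarrow> ('s \<Rightarrow> bool) \<Rightarrow> ('s \<Rightarrow> bool) option" where
  "canon_action g \<phi> = (if \<phi> \<in> U_set (star g * g)
      then Some (\<lambda>e. e \<in> idems \<and> \<phi> (star g * e * g)) else None)"

end

theory Submission
  imports Defs
begin

text \<open>A point x of a space with an S-action determines the character
  e \<mapsto> [e \<cdot> x is defined] on E; it is multiplicative because idempotents act as
  partial identities.  At an idempotent e, equivariance of a map f : X \<rightarrow> Ehat says exactly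
  that f(x)(e) = 1 iff e \<cdot> x is defined, so this is the only candidate.  It is continuous
  because the preimage of U_e is the domain of e, and equivariant because (g* e g) \<cdot> x is
  defined iff e \<cdot> (g \<cdot> x) is.  The same conjugation formula shows that the maps c_g form an
  action of S on Ehat by partial homeomorphisms.\<close>

lemma character_mult:
  "\<phi> \<in> characters \<Longrightarrow> e \<in> idems \<Longrightarrow> f \<in> idems \<Longrightarrow> \<phi> (e * f) \<longleftrightarrow> \<phi> e \<and> \<phi> f"
  unfolding characters_def by blast

lemma character_imp_idem: "\<phi> \<in> characters \<Longrightarrow> \<phi> s \<Longrightarrow> s \<in> idems"
  unfolding characters_def by blast

lemma topspace_Ehat_top:
  "topspace (Ehat_top :: ('s::{monoid_mult,mult_zero} \<Rightarrow> bool) topology) = characters"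
proof -
  have "(1::'s) \<in> idems" by (simp add: idems_def)
  then have "\<Union>{U_set e | e::'s. e \<in> idems} = characters"
    by (auto simp: U_set_def characters_def)
  then show ?thesis unfolding Ehat_top_def topology_generated_by_topspace .
qed

lemma openin_U_set: "e \<in> idems \<Longrightarrow> openin Ehat_top (U_set e)"
  unfolding Ehat_top_def by (rule topology_generated_by_Basis) blast

lemma continuous_map_Ehat_topI:
  fixes f :: "'x \<Rightarrow> 's::{monoid_mult,mult_zero} \<Rightarrow> bool"
  assumes "\<And>x. x \<in> topspace X \<Longrightarrow> f x \<in> characters"
    and "\<And>e. e \<in> idems \<Longrightarrow> openin X {x \<in> topspace X. f x e}"
  shows "continuous_map X Ehat_top f"
  unfolding Ehat_top_def
proof (rule continuous_on_generated_topo)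
  fix U assume "U \<in> {U_set e | e::'s. e \<in> idems}"
  then obtain e where "e \<in> idems" and "U = U_set e" by blast
  moreover have "f -` U_set e \<inter> topspace X = {x \<in> topspace X. f x e}"
    using assms(1) by (auto simp: U_set_def)
  ultimately show "openin X (f -` U \<inter> topspace X)" using assms(2) by simp
next
  show "f ` topspace X \<subseteq> \<Union>{U_set e | e::'s. e \<in> idems}"
    using assms(1) topspace_Ehat_top unfolding Ehat_top_def by auto
qed

definition conj_character :: "'s::monoid_mult \<Rightarrow> ('s \<Rightarrow> bool) \<Rightarrow> 's \<Rightarrow> bool" where
  "conj_character s \<phi> = (\<lambda>e. e \<in> idems \<and> \<phi> (star s * e * s))"

lemma canon_action_eq:
  "canon_action s \<phi> = (if \<phi> \<in> U_set (star s * s) then Some (conj_character s \<phi>) else None)"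
  unfolding canon_action_def conj_character_def by simp

lemma action_mult: "is_action X \<alpha> \<Longrightarrow> \<alpha> (s * t) x = Option.bind (\<alpha> t x) (\<alpha> s)"
  unfolding is_action_def by blast

text \<open>Idempotents act as partial identities, since e \<cdot> (e \<cdot> x) = e \<cdot> x and e acts injectively.\<close>
lemma action_idem_fixes:
  assumes act: "is_action X \<alpha>" and e: "e \<in> idems" and ex: "\<alpha> e x = Some y"
  shows "y = x"
proof -
  have "\<alpha> e y = \<alpha> (e * e) x" using action_mult[OF act, of e e x] ex by simp
  then have ey: "\<alpha> e y = Some y" using e ex by (simp add: idems_def)
  have "inj_on (\<lambda>x. the (\<alpha> e x)) (dom (\<alpha> e))"
    using act homeomorphic_imp_injective_map unfolding is_action_def
    by (metis inf.absorb_iff2 topspace_subtopology)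
  moreover have "x \<in> dom (\<alpha> e)" "y \<in> dom (\<alpha> e)" using ex ey by auto
  ultimately show ?thesis using ex ey unfolding inj_on_def by (metis option.sel)
qed

lemma action_idem_mult_defined:
  assumes "is_action X \<alpha>" "f \<in> idems"
  shows "\<alpha> (e * f) x \<noteq> None \<longleftrightarrow> \<alpha> e x \<noteq> None \<and> \<alpha> f x \<noteq> None"
proof (cases "\<alpha> f x")
  case None
  then show ?thesis by (simp add: action_mult[OF assms(1)])
next
  case (Some y)
  then show ?thesis using action_idem_fixes[OF assms Some] by (simp add: action_mult[OF assms(1)])
qed

definition domain_character :: "('s::monoid_mult \<Rightarrow> 'x \<Rightarrow> 'x option) \<Rightarrow> 'x \<Rightarrow> 's \<Rightarrow> bool" where
  "domain_character \<alpha> x = (\<lambda>e. e \<in> idems \<and> \<alpha> e x \<noteq> None)"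

section \<open>Inverse semigroups\<close>

context
  assumes inverse: "inverse_semigroup_ax TYPE('s::{monoid_mult,mult_zero})"
begin

lemma star_unique_inverse: "\<exists>!t. (s::'s) * t * s = s \<and> t * s * t = t"
  using inverse unfolding inverse_semigroup_ax_def by blast

lemma mult_star_mult: "(s::'s) * star s * s = s"
  and star_mult_star: "star (s::'s) * s * star s = star s"
  using theI'[OF star_unique_inverse[of s]] unfolding star_def by blast+

lemma star_eqI: "(s::'s) * t * s = s \<Longrightarrow> t * s * t = t \<Longrightarrow> star s = t"
  unfolding star_def using star_unique_inverse by (intro the1_equality) auto

lemma star_star [simp]: "star (star (s::'s)) = s"
  using mult_star_mult star_mult_star by (intro star_eqI)

lemma star_idem: "(e::'s) \<in> idems \<Longrightarrow> star e = e"
  unfolding idems_def by (intro star_eqI) (simp_all add: mult.assoc)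

lemma mult_star_in_idems: "(s::'s) * star s \<in> idems"
proof -
  have "s * star s * (s * star s) = (s * star s * s) * star s" by (simp add: mult.assoc)
  then show ?thesis by (simp add: idems_def mult_star_mult)
qed

lemma star_mult_in_idems: "star (s::'s) * s \<in> idems"
  using mult_star_in_idems[of "star s"] by simp

lemma idems_mult_closed:
  assumes "(e::'s) \<in> idems" "f \<in> idems"
  shows "e * f \<in> idems"
proof -
  have ee: "e * e = e" and ff: "f * f = f" using assms unfolding idems_def by auto
  define a where "a = e * f"
  define b where "b = star a"
  have aba: "a * b * a = a" and bab: "b * a * b = b"
    unfolding b_def by (fact mult_star_mult, fact star_mult_star)
  txt \<open>f b e is also an inverse of a, so b = f b e, which forces b to be idempotent;
    an idempotent is its own inverse, hence a = b.\<close>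
  have "a * (f * b * e) * a = e * (f * f) * b * (e * e) * f"
    unfolding a_def by (simp add: mult.assoc)
  also have "\<dots> = a * b * a" unfolding a_def ee ff by (simp add: mult.assoc)
  finally have inv1: "a * (f * b * e) * a = a" using aba by simp
  have "f * b * e * a * (f * b * e) = f * (b * (e * e) * (f * f) * b) * e"
    unfolding a_def by (simp add: mult.assoc)
  also have "\<dots> = f * b * e" using bab unfolding a_def ee ff by (simp add: mult.assoc)
  finally have inv2: "f * b * e * a * (f * b * e) = f * b * e" .
  have b_eq: "b = f * b * e"
    using star_eqI[OF inv1 inv2] unfolding b_def .
  have "b * b = (f * b * e) * (f * b * e)"
    using arg_cong2[OF b_eq b_eq, of "(*)"] .
  also have "\<dots> = f * (b * a * b) * e" unfolding a_def by (simp add: mult.assoc)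
  also have "\<dots> = b" using bab b_eq[symmetric] by simp
  finally have bb: "b * b = b" .
  have "a = star b" using aba bab by (intro star_eqI[symmetric])
  also have "\<dots> = b" using bb by (intro star_idem) (simp add: idems_def)
  finally show ?thesis using bb unfolding idems_def a_def by simp
qed

lemma idems_commute:
  assumes "(e::'s) \<in> idems" "f \<in> idems"
  shows "e * f = f * e"
proof -
  have ee: "e * e = e" and ff: "f * f = f" using assms unfolding idems_def by auto
  have ef: "e * f \<in> idems" and fe: "f * e \<in> idems" using idems_mult_closed assms by auto
  txt \<open>f e is an inverse of the idempotent e f, which is its own unique inverse.\<close>
  have "(e * f) * (f * e) * (e * f) = e * (f * f) * (e * e) * f" by (simp add: mult.assoc)
  then have inv1: "(e * f) * (f * e) * (e * f) = e * f"
    using ef unfolding ee ff idems_def by (simp add: mult.assoc)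
  have "(f * e) * (e * f) * (f * e) = f * (e * e) * (f * f) * e" by (simp add: mult.assoc)
  then have inv2: "(f * e) * (e * f) * (f * e) = f * e"
    using fe unfolding ee ff idems_def by (simp add: mult.assoc)
  have "star (e * f) = f * e" using inv1 inv2 by (rule star_eqI)
  then show ?thesis using star_idem[OF ef] by simp
qed

lemma star_mult_idem_mult:
  assumes "(e::'s) \<in> idems"
  shows "star s * e * s \<in> idems"
proof -
  have "(star s * e * s) * (star s * e * s) = star s * (e * (s * star s)) * e * s"
    by (simp add: mult.assoc)
  also have "\<dots> = star s * (s * star s) * (e * e) * s"
    using idems_commute[OF assms mult_star_in_idems] by (simp add: mult.assoc)
  also have "\<dots> = star s * e * s"
    using star_mult_star[of s] assms unfolding idems_def by (simp add: mult.assoc)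
  finally show ?thesis by (simp add: idems_def)
qed

lemma star_mult: "star ((s::'s) * t) = star t * star s"
proof (rule star_eqI)
  have c: "(star s * s) * (t * star t) = (t * star t) * (star s * s)"
    using idems_commute star_mult_in_idems mult_star_in_idems by blast
  have "s * t * (star t * star s) * (s * t) = s * ((t * star t) * (star s * s)) * t"
    by (simp add: mult.assoc)
  also have "\<dots> = (s * star s * s) * (t * star t * t)" unfolding c[symmetric] by (simp add: mult.assoc)
  finally show "s * t * (star t * star s) * (s * t) = s * t" by (simp add: mult_star_mult)
  have "star t * star s * (s * t) * (star t * star s) = star t * ((star s * s) * (t * star t)) * star s"
    by (simp add: mult.assoc)
  also have "\<dots> = (star t * t * star t) * (star s * s * star s)" unfolding c by (simp add: mult.assoc)
  finally show "star t * star s * (s * t) * (star t * star s) = star t * star s"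
    by (simp add: star_mult_star)
qed

lemma star_one: "star (1::'s) = 1"
  by (rule star_idem) (simp add: idems_def)

lemma star_zero: "star (0::'s) = 0"
  by (rule star_idem) (simp add: idems_def)

section \<open>The canonical action on the spectrum\<close>

lemma conj_character_in_U_set:
  assumes "\<phi> \<in> U_set (star (s::'s) * s)"
  shows "conj_character s \<phi> \<in> U_set (s * star s)"
proof -
  have \<phi>: "\<phi> \<in> characters" "\<phi> (star s * s)" using assms by (auto simp: U_set_def)
  have "conj_character s \<phi> (e * f) \<longleftrightarrow> conj_character s \<phi> e \<and> conj_character s \<phi> f"
    if ef: "e \<in> idems" "f \<in> idems" for e f
  proof -
    have "star s * e * s * (star s * f * s) = star s * (e * (s * star s)) * f * s"
      by (simp add: mult.assoc)
    also have "\<dots> = star s * (s * star s) * e * f * s"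
      using idems_commute[OF ef(1) mult_star_in_idems] by (simp add: mult.assoc)
    also have "\<dots> = star s * (e * f) * s" using star_mult_star[of s] by (simp add: mult.assoc)
    finally have "star s * e * s * (star s * f * s) = star s * (e * f) * s" .
    then show ?thesis
      using character_mult[OF \<phi>(1) star_mult_idem_mult[OF ef(1), of s] star_mult_idem_mult[OF ef(2), of s]]
        idems_mult_closed[OF ef] ef
      unfolding conj_character_def by simp
  qed
  moreover have "\<not> conj_character s \<phi> 0"
    using \<phi>(1) by (simp add: conj_character_def characters_def)
  moreover have "conj_character s \<phi> (s * star s)"
    using mult_star_in_idems[of s] \<phi>(2)
    by (simp add: conj_character_def star_mult_star flip: mult.assoc)
  moreover have "conj_character s \<phi> 1"
    using \<phi>(2) by (simp add: conj_character_def idems_def)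
  ultimately show ?thesis
    by (simp add: U_set_def characters_def conj_character_def)
qed

lemma conj_character_star_cancel:
  assumes "\<phi> \<in> U_set (star (s::'s) * s)"
  shows "conj_character (star s) (conj_character s \<phi>) = \<phi>"
proof
  fix e
  have \<phi>: "\<phi> \<in> characters" "\<phi> (star s * s)" using assms by (auto simp: U_set_def)
  show "conj_character (star s) (conj_character s \<phi>) e = \<phi> e"
  proof (cases "e \<in> idems")
    case True
    have "star s * (s * e * star s) * s = (star s * s) * e * (star s * s)"
      by (simp add: mult.assoc)
    also have "\<dots> = e * ((star s * s) * (star s * s))"
      using idems_commute[OF True star_mult_in_idems, of s, symmetric] by (simp add: mult.assoc)
    also have "\<dots> = e * (star s * s)" using star_mult_in_idems[of s] by (simp add: idems_def)
    finally have "star s * (s * e * star s) * s = e * (star s * s)" .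
    moreover have "s * e * star s \<in> idems" using star_mult_idem_mult[OF True, of "star s"] by simp
    ultimately show ?thesis
      using True character_mult[OF \<phi>(1) True star_mult_in_idems] \<phi>(2)
      by (simp add: conj_character_def)
  next
    case False
    then show ?thesis using character_imp_idem[OF \<phi>(1)] by (auto simp: conj_character_def)
  qed
qed

lemma conj_character_mult:
  "conj_character s (conj_character t \<phi>) = conj_character ((s::'s) * t) \<phi>"
  using star_mult_idem_mult
  by (auto simp: conj_character_def fun_eq_iff star_mult mult.assoc)

lemma dom_canon_action: "dom (canon_action (s::'s)) = U_set (star s * s)"
  by (auto simp: canon_action_eq dom_def)

lemma ran_canon_action: "ran (canon_action (s::'s)) = U_set (s * star s)"
proof
  show "ran (canon_action s) \<subseteq> U_set (s * star s)"
    using conj_character_in_U_set by (auto simp: canon_action_eq ran_def split: if_splits)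
  show "U_set (s * star s) \<subseteq> ran (canon_action s)"
  proof
    fix \<psi> assume "\<psi> \<in> U_set (s * star s)"
    then have \<psi>: "\<psi> \<in> U_set (star (star s) * star s)" by simp
    have "canon_action s (conj_character (star s) \<psi>) = Some \<psi>"
      using conj_character_in_U_set[OF \<psi>] conj_character_star_cancel[OF \<psi>]
      by (simp add: canon_action_eq)
    then show "\<psi> \<in> ran (canon_action s)" by (auto simp: ran_def)
  qed
qed

lemma continuous_map_canon_action:
  "continuous_map (subtopology Ehat_top (U_set (star (s::'s) * s)))
     (subtopology Ehat_top (U_set (s * star s))) (\<lambda>\<phi>. the (canon_action s \<phi>))"
  unfolding continuous_map_in_subtopology
proof
  have dom: "topspace (subtopology Ehat_top (U_set (star s * s))) = U_set (star s * s)"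
    by (auto simp: topspace_Ehat_top U_set_def)
  show "continuous_map (subtopology Ehat_top (U_set (star s * s))) Ehat_top
          (\<lambda>\<phi>. the (canon_action s \<phi>))"
  proof (rule continuous_map_Ehat_topI)
    show "the (canon_action s \<phi>) \<in> characters"
      if "\<phi> \<in> topspace (subtopology Ehat_top (U_set (star s * s)))" for \<phi>
      using that conj_character_in_U_set unfolding dom by (auto simp: canon_action_eq U_set_def)
    fix e :: 's assume e: "e \<in> idems"
    have "{\<phi> \<in> topspace (subtopology Ehat_top (U_set (star s * s))). the (canon_action s \<phi>) e}
        = U_set (star s * e * s) \<inter> U_set (star s * s)"
      using e unfolding dom by (auto simp: canon_action_eq conj_character_def U_set_def)
    then show "openin (subtopology Ehat_top (U_set (star s * s)))
        {\<phi> \<in> topspace (subtopology Ehat_top (U_set (star s * s))). the (canon_action s \<phi>) e}"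
      using openin_U_set[OF star_mult_idem_mult[OF e]] by (auto simp: openin_subtopology)
  qed
  show "(\<lambda>\<phi>. the (canon_action s \<phi>)) \<in> topspace (subtopology Ehat_top (U_set (star s * s)))
          \<rightarrow> U_set (s * star s)"
    using conj_character_in_U_set unfolding dom by (auto simp: canon_action_eq)
qed

lemma homeomorphic_map_canon_action:
  "homeomorphic_map (subtopology Ehat_top (dom (canon_action (s::'s))))
     (subtopology Ehat_top (ran (canon_action s))) (\<lambda>\<phi>. the (canon_action s \<phi>))"
  unfolding homeomorphic_map_maps homeomorphic_maps_def dom_canon_action ran_canon_action
proof (intro exI conjI ballI)
  show "continuous_map (subtopology Ehat_top (U_set (star s * s)))
          (subtopology Ehat_top (U_set (s * star s))) (\<lambda>\<phi>. the (canon_action s \<phi>))"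
    by (rule continuous_map_canon_action)
  show "continuous_map (subtopology Ehat_top (U_set (s * star s)))
          (subtopology Ehat_top (U_set (star s * s))) (\<lambda>\<phi>. the (canon_action (star s) \<phi>))"
    using continuous_map_canon_action[of "star s"] by simp
  fix \<phi> assume "\<phi> \<in> topspace (subtopology Ehat_top (U_set (star s * s)))"
  then have \<phi>: "\<phi> \<in> U_set (star s * s)" by simp
  show "the (canon_action (star s) (the (canon_action s \<phi>))) = \<phi>"
    using conj_character_in_U_set[OF \<phi>] conj_character_star_cancel[OF \<phi>]
    by (simp add: canon_action_eq \<phi>)
next
  fix \<psi> assume "\<psi> \<in> topspace (subtopology Ehat_top (U_set (s * star s)))"
  then have \<psi>: "\<psi> \<in> U_set (star (star s) * star s)" by simp
  show "the (canon_action s (the (canon_action (star s) \<psi>))) = \<psi>"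
    using conj_character_in_U_set[OF \<psi>] conj_character_star_cancel[OF \<psi>] \<psi>
    by (simp add: canon_action_eq)
qed

lemma canon_action_mult:
  "canon_action ((s::'s) * t) \<phi> = Option.bind (canon_action t \<phi>) (canon_action s)"
proof -
  have dom_st: "star (s * t) * (s * t) = star t * (star s * s) * t"
    by (simp add: star_mult mult.assoc)
  txt \<open>(s t)^* (s t) \<le> t^* t, so the domain of s t lies inside the domain of t.\<close>
  have "star t * (star s * s) * t * (star t * t) = star t * (star s * s) * (t * star t * t)"
    by (simp add: mult.assoc)
  then have below: "star t * (star s * s) * t * (star t * t) = star t * (star s * s) * t"
    by (simp add: mult_star_mult)
  show ?thesis
  proof (cases "\<phi> \<in> U_set (star t * t)")
    case False
    moreover have "star t * (star s * s) * t \<in> idems"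
      using star_mult_idem_mult star_mult_in_idems by blast
    ultimately have "\<phi> \<notin> U_set (star (s * t) * (s * t))"
      using below character_mult[OF _ _ star_mult_in_idems, of \<phi> "star t * (star s * s) * t" t]
      unfolding dom_st by (auto simp: U_set_def)
    then show ?thesis using False by (simp add: canon_action_eq)
  next
    case True
    have "conj_character t \<phi> (star s * s) \<longleftrightarrow> \<phi> (star (s * t) * (s * t))"
      unfolding dom_st by (simp add: conj_character_def star_mult_in_idems)
    then show ?thesis using True conj_character_in_U_set[OF True]
      by (simp add: canon_action_eq conj_character_mult U_set_def)
  qed
qed

lemma is_action_canon_action: "is_action (Ehat_top :: ('s \<Rightarrow> bool) topology) canon_action"
  unfolding is_action_def
proof (intro conjI allI ballI)
  fix s :: 's
  show "dom (canon_action s) \<subseteq> topspace Ehat_top"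
    by (auto simp: dom_canon_action topspace_Ehat_top U_set_def)
  show "openin Ehat_top (dom (canon_action s))"
    unfolding dom_canon_action by (rule openin_U_set[OF star_mult_in_idems])
  show "openin Ehat_top (ran (canon_action s))"
    unfolding ran_canon_action by (rule openin_U_set[OF mult_star_in_idems])
  show "homeomorphic_map (subtopology Ehat_top (dom (canon_action s)))
          (subtopology Ehat_top (ran (canon_action s))) (\<lambda>\<phi>. the (canon_action s \<phi>))"
    by (rule homeomorphic_map_canon_action)
next
  fix \<phi> :: "'s \<Rightarrow> bool" assume "\<phi> \<in> topspace Ehat_top"
  then have "\<phi> \<in> characters" by (simp add: topspace_Ehat_top)
  then show "canon_action 1 \<phi> = Some \<phi>"
    using character_imp_idem
    by (auto simp: canon_action_eq conj_character_def star_one U_set_def characters_def)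
next
  show "canon_action 0 \<phi> = None" for \<phi> :: "'s \<Rightarrow> bool"
    by (auto simp: canon_action_eq star_zero U_set_def characters_def)
qed (rule canon_action_mult)

section \<open>The spectrum is terminal\<close>

lemma action_star_defined:
  assumes act: "is_action X (\<alpha> :: 's \<Rightarrow> 'x \<Rightarrow> 'x option)" and sx: "\<alpha> s x = Some y"
  shows "\<alpha> (star s) y \<noteq> None"
proof -
  have "Option.bind (\<alpha> (star s) y) (\<alpha> s) = \<alpha> ((s * star s) * s) x"
    using sx by (simp add: action_mult[OF act] mult.assoc)
  also have "\<dots> = Some y" using sx by (simp add: mult_star_mult)
  finally show ?thesis by (cases "\<alpha> (star s) y") auto
qed

lemma action_defined_iff:
  "is_action X (\<alpha> :: 's \<Rightarrow> 'x \<Rightarrow> 'x option) \<Longrightarrow> \<alpha> s x \<noteq> None \<longleftrightarrow> \<alpha> (star s * s) x \<noteq> None"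
  using action_star_defined by (cases "\<alpha> s x") (auto simp: action_mult)

lemma domain_character_in_characters:
  assumes act: "is_action X (\<alpha> :: 's \<Rightarrow> 'x \<Rightarrow> 'x option)" and x: "x \<in> topspace X"
  shows "domain_character \<alpha> x \<in> characters"
proof -
  have "\<alpha> 1 x = Some x" "\<alpha> 0 x = None" using act x unfolding is_action_def by auto
  then show ?thesis
    using action_idem_mult_defined[OF act] idems_mult_closed
    by (auto simp: characters_def domain_character_def idems_def)
qed

lemma continuous_map_domain_character:
  assumes act: "is_action X (\<alpha> :: 's \<Rightarrow> 'x \<Rightarrow> 'x option)"
  shows "continuous_map X Ehat_top (domain_character \<alpha>)"
proof (rule continuous_map_Ehat_topI)
  show "domain_character \<alpha> x \<in> characters" if "x \<in> topspace X" for x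
    using domain_character_in_characters[OF act that] .
  fix e :: 's assume "e \<in> idems"
  then have "{x \<in> topspace X. domain_character \<alpha> x e} = dom (\<alpha> e)"
    using act unfolding is_action_def by (auto simp: domain_character_def)
  then show "openin X {x \<in> topspace X. domain_character \<alpha> x e}"
    using act unfolding is_action_def by simp
qed

lemma conj_character_domain_character:
  assumes act: "is_action X (\<alpha> :: 's \<Rightarrow> 'x \<Rightarrow> 'x option)" and sx: "\<alpha> s x = Some y"
  shows "conj_character s (domain_character \<alpha> x) = domain_character \<alpha> y"
proof
  fix e
  show "conj_character s (domain_character \<alpha> x) e = domain_character \<alpha> y e"
  proof (cases "e \<in> idems")
    case True
    have "\<alpha> (star s * e * s) x = Option.bind (\<alpha> e y) (\<alpha> (star s))"
      using sx by (simp add: action_mult[OF act])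
    moreover have "\<alpha> e y = Some z \<Longrightarrow> \<alpha> (star s) z \<noteq> None" for z
      using action_idem_fixes[OF act True] action_star_defined[OF act sx] by blast
    ultimately have "\<alpha> (star s * e * s) x \<noteq> None \<longleftrightarrow> \<alpha> e y \<noteq> None"
      by (cases "\<alpha> e y") auto
    then show ?thesis
      using True star_mult_idem_mult[OF True, of s]
      by (simp add: conj_character_def domain_character_def)
  qed (simp add: conj_character_def domain_character_def)
qed

lemma equivariant_domain_character:
  assumes act: "is_action X (\<alpha> :: 's \<Rightarrow> 'x \<Rightarrow> 'x option)"
  shows "equivariant X \<alpha> canon_action (domain_character \<alpha>)"
  unfolding equivariant_def
proof (intro allI ballI conjI impI)
  fix s x assume x: "x \<in> topspace X"
  have in_U: "domain_character \<alpha> x \<in> U_set (star s * s) \<longleftrightarrow> \<alpha> s x \<noteq> None"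
    using domain_character_in_characters[OF act x] action_defined_iff[OF act]
    by (simp add: U_set_def domain_character_def star_mult_in_idems)
  then show "\<alpha> s x \<noteq> None \<longleftrightarrow> canon_action s (domain_character \<alpha> x) \<noteq> None"
    by (simp add: canon_action_eq)
  assume "\<alpha> s x \<noteq> None"
  then obtain y where y: "\<alpha> s x = Some y" by blast
  then show "canon_action s (domain_character \<alpha> x) = Some (domain_character \<alpha> (the (\<alpha> s x)))"
    using in_U conj_character_domain_character[OF act y] by (simp add: canon_action_eq)
qed

lemma equivariant_to_Ehat_unique:
  assumes "equivariant X (\<alpha> :: 's \<Rightarrow> 'x \<Rightarrow> 'x option) canon_action f"
    and "x \<in> topspace X" and "f x \<in> characters"
  shows "f x = domain_character \<alpha> x"
proof
  fix e
  show "f x e = domain_character \<alpha> x e"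
  proof (cases "e \<in> idems")
    case True
    have "\<alpha> e x \<noteq> None \<longleftrightarrow> canon_action e (f x) \<noteq> None"
      using assms(1,2) unfolding equivariant_def by blast
    also have "\<dots> \<longleftrightarrow> f x e"
      using assms(3) True star_idem[OF True] by (simp add: canon_action_eq U_set_def idems_def)
    finally show ?thesis using True by (simp add: domain_character_def)
  qed (use assms(3) character_imp_idem in \<open>auto simp: domain_character_def\<close>)
qed

end

theorem theorem2p22:
  assumes "inverse_semigroup_ax TYPE('s::{monoid_mult,mult_zero})"
  shows "is_action (Ehat_top :: ('s \<Rightarrow> bool) topology) canon_action \<and>
    (\<forall>(X :: 'x topology) \<alpha>. is_action X (\<alpha> :: 's \<Rightarrow> 'x \<Rightarrow> 'x option) \<longrightarrow>
       (\<exists>f. continuous_map X Ehat_top f \<and> equivariant X \<alpha> canon_action f \<and>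
            (\<forall>g. continuous_map X Ehat_top g \<and> equivariant X \<alpha> canon_action g \<longrightarrow>
                 (\<forall>x\<in>topspace X. g x = f x))))"
proof (intro conjI allI impI exI ballI)
  show "is_action (Ehat_top :: ('s \<Rightarrow> bool) topology) canon_action"
    using is_action_canon_action[OF assms] .
  fix X :: "'x topology" and \<alpha> :: "'s \<Rightarrow> 'x \<Rightarrow> 'x option"
  assume act: "is_action X \<alpha>"
  show "continuous_map X Ehat_top (domain_character \<alpha>)"
    using continuous_map_domain_character[OF assms act] .
  show "equivariant X \<alpha> canon_action (domain_character \<alpha>)"
    using equivariant_domain_character[OF assms act] .
  fix g x
  assume g: "continuous_map X Ehat_top g \<and> equivariant X \<alpha> canon_action g"
    and x: "x \<in> topspace X"
  have "g x \<in> characters"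
    using continuous_map_image_subset_topspace[of X Ehat_top g] g x topspace_Ehat_top by blast
  then show "g x = domain_character \<alpha> x"
    using equivariant_to_Ehat_unique[OF assms _ x] g by blast
qed

end
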